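(* There exist two sequences of real numbers $a_k$, $b_k$ whose associated series converge absolutely, and such that, defining $\bar{\Gamma}_1 := \sum_{k =0}^\infty a_k \big(\frac{\gamma^2}{1+\gamma^2}\big)^k$ and $\bar{\Gamma}_2 := \sum_{k =0}^\infty b_k \big(\frac{\gamma^2}{1+\gamma^2}\big)^k$, the functions $\bar{\Gamma}_1$ and $\bar{\Gamma}_2$ solve $4 \gamma \partial_\gamma \bar \Gamma_1 + 6 \bar \Gamma_1 - 13 \bar \Gamma_2 = 0$, $4 \gamma \partial_\gamma \bar \Gamma_2 + 9 \bar\Gamma_2 - \frac{10} {1+\gamma^2}\big(\bar \Gamma_1 + \gamma^2 \frac{2}{\pi}\int_0^\infty \bar \Gamma_1\frac{d\gamma}{1+\gamma^2}\big) = 0$, with $\frac{2}{\pi}\int_0^\infty \bar{\Gamma}_1\frac{d\gamma}{1+\gamma^2} = A$, where $A=-\frac{351}{19}$.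
   Context: $\gamma=\tan\theta\in[0,\infty)$, so $\frac{2}{\pi}\int_0^\infty f\frac{d\gamma}{1+\gamma^2}$ is the angular average over $\theta\in[0,\pi/2]$. This is the profile equation for $\bar\Gamma=\Gamma^*-\Gamma^*(\gamma=0)$ of the (renormalized) angular profile $\Gamma^*$, whose first component has angular average $26$; $A$ is the angular average of $\bar\Gamma_1$. *)

theory Defs
  imports "HOL-Analysis.Analysis"
begin

end

theory Submission
  imports Defs "HOL-Probability.Sinc_Integral" "HOL-Real_Asymp.Real_Asymp"
begin

(* In the variable x = \<gamma>\<^sup>2 / (1 + \<gamma>\<^sup>2) the profile equations, with M replaced by a
   parameter m, become 8 x (1 - x) A' + 6 A - 13 B = 0 and
   8 x (1 - x) B' + 9 B - 10 (1 - x) A - 10 m x = 0. Comparing coefficients determines the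
   Taylor coefficients (a_k, b_k) recursively. For large k the recursion shrinks
   |a_k| + 3 |b_k| by the factor 1 - 3 / (2k + 2), so by a Raabe-type comparison the
   coefficients are absolutely summable and the series converge for all real \<gamma>.
   Adding the two profile equations shows that m arctan \<gamma> - (2/5) (\<Gamma>\<^sub>1 + \<Gamma>\<^sub>2) / \<gamma> is an
   antiderivative of \<Gamma>\<^sub>1 / (1 + \<gamma>\<^sup>2); since \<Gamma>\<^sub>i = O(x), the quotient vanishes at 0 and at
   infinity, so the angular average of \<Gamma>\<^sub>1 is m. The self-consistency condition therefore
   holds for every m, and the theorem is the case m = -351/19. *)

section \<open>Summability by comparison of ratios\<close>

lemma summable_by_ratio_comparison:
  fixes v t :: "nat \<Rightarrow> real"
  assumes "summable t" and t_pos: "\<And>n. 0 < t n" and v_nonneg: "\<And>n. 0 \<le> v n"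
    and ratio: "\<And>n. n \<ge> N \<Longrightarrow> v (Suc n) * t n \<le> v n * t (Suc n)"
  shows "summable v"
proof -
  have ratio_decreasing: "v n / t n \<le> v N / t N" if "n \<ge> N" for n
    using that
  proof (induction n rule: nat_induct_at_least)
    case (Suc n)
    have "v (Suc n) / t (Suc n) \<le> v n / t n"
      using ratio[OF Suc.hyps] t_pos[of n] t_pos[of "Suc n"] by (simp add: divide_simps)
    with Suc.IH show ?case by linarith
  qed simp
  have "norm (v n) \<le> v N / t N * t n" if "n \<ge> N" for n
    using ratio_decreasing[OF that] t_pos[of n] v_nonneg[of n] by (simp add: pos_divide_le_eq)
  then show ?thesis
    by (rule summable_comparison_test'[OF summable_mult[OF \<open>summable t\<close>]])
qed

fun wallis :: "nat \<Rightarrow> real" where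
  "wallis 0 = 1"
| "wallis (Suc n) = wallis n * (2 * real n + 1) / (2 * real n + 2)"

lemma wallis_pos: "0 < wallis n"
  by (induction n) auto

lemma summable_wallis_over_Suc: "summable (\<lambda>n. wallis n / (real n + 1))"
proof -
  have telescope: "wallis n / (real n + 1) = 2 * (wallis n - wallis (Suc n))" for n
    by (simp add: field_simps)
  have "summable (\<lambda>n. wallis n - wallis (Suc n))"
  proof (rule summableI_nonneg_bounded)
    show "0 \<le> wallis n - wallis (Suc n)" for n
      using wallis_pos[of n] by (simp add: field_simps)
    show "(\<Sum>i<n. wallis i - wallis (Suc i)) \<le> 1" for n
      using sum_lessThan_telescope'[of wallis n] wallis_pos[of n] by simp
  qed
  then show ?thesis
    unfolding telescope by (rule summable_mult)
qed

(* The ratio 1 - 3 / (2n + 2) is dominated by that of wallis n / (n + 1) ~ n powr (-3/2). *)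
lemma summable_by_Raabe_three_halves:
  fixes v :: "nat \<Rightarrow> real"
  assumes "\<And>n. 0 \<le> v n"
    and "\<And>n. n \<ge> N \<Longrightarrow> (2 * real n + 2) * v (Suc n) \<le> (2 * real n - 1) * v n"
  shows "summable v"
proof (rule summable_by_ratio_comparison[OF summable_wallis_over_Suc _ assms(1)])
  show "0 < wallis n / (real n + 1)" for n
    using wallis_pos[of n] by simp
  fix n assume "n \<ge> N"
  have "v (Suc n) \<le> (2 * real n - 1) / (2 * real n + 2) * v n"
    using assms(2)[OF \<open>n \<ge> N\<close>] by (simp add: field_simps)
  also have "\<dots> \<le> (2 * real n + 1) / (2 * real n + 4) * v n"
    using assms(1)[of n] by (intro mult_right_mono) (simp_all add: field_simps)
  finally have "v (Suc n) * (wallis n / (real n + 1))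
      \<le> (2 * real n + 1) / (2 * real n + 4) * v n * (wallis n / (real n + 1))"
    by (rule mult_right_mono) (simp add: less_imp_le wallis_pos)
  also have "\<dots> = v n * (wallis (Suc n) / (real (Suc n) + 1))"
    by (simp add: field_simps)
  finally show "v (Suc n) * (wallis n / (real n + 1)) \<le> v n * (wallis (Suc n) / (real (Suc n) + 1))" .
qed

section \<open>The Taylor coefficients\<close>

(* (a_k, b_k) solves, by Cramer's rule, the linear system obtained by comparing the
   coefficients of x^k in afps_ode and bfps_ode; its determinant is 4 (8k + 19) (2k - 1). *)
fun coeffs :: "real \<Rightarrow> nat \<Rightarrow> real \<times> real" where
  "coeffs m 0 = (0, 0)"
| "coeffs m (Suc n) =
     (let (a, b) = coeffs m n; k = real (Suc n);
          r1 = 8 * real n * a;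
          r2 = 8 * real n * b - 10 * a + (if n = 0 then 10 * m else 0);
          det = (8 * k + 6) * (8 * k + 9) - 130
      in (((8 * k + 9) * r1 + 13 * r2) / det, (10 * r1 + (8 * k + 6) * r2) / det))"

definition acoeff :: "real \<Rightarrow> nat \<Rightarrow> real" where "acoeff m n = fst (coeffs m n)"
definition bcoeff :: "real \<Rightarrow> nat \<Rightarrow> real" where "bcoeff m n = snd (coeffs m n)"

lemma acoeff_0 [simp]: "acoeff m 0 = 0" and bcoeff_0 [simp]: "bcoeff m 0 = 0"
  by (simp_all add: acoeff_def bcoeff_def)

lemma coeffs_linear_system:
  "(8 * real (Suc n) + 6) * acoeff m (Suc n) - 13 * bcoeff m (Suc n) = 8 * real n * acoeff m n"
  "(8 * real (Suc n) + 9) * bcoeff m (Suc n) - 10 * acoeff m (Suc n)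
     = 8 * real n * bcoeff m n - 10 * acoeff m n + (if n = 0 then 10 * m else 0)"
proof -
  define p q r1 r2 where "p = 8 * real (Suc n) + 6" and "q = 8 * real (Suc n) + 9"
    and "r1 = 8 * real n * acoeff m n"
    and "r2 = 8 * real n * bcoeff m n - 10 * acoeff m n + (if n = 0 then 10 * m else 0)"
  define det where "det = p * q - 130"
  have a: "acoeff m (Suc n) = (q * r1 + 13 * r2) / det"
    and b: "bcoeff m (Suc n) = (10 * r1 + p * r2) / det"
    by (simp_all add: det_def p_def q_def r1_def r2_def acoeff_def bcoeff_def split_beta Let_def)
  have "det = 4 * (8 * real n + 27) * (2 * real n + 1)"
    by (simp add: det_def p_def q_def algebra_simps)
  then have "det \<noteq> 0"
    by (simp add: add_pos_nonneg)
  then have "p * acoeff m (Suc n) - 13 * bcoeff m (Suc n) = r1"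
    and "q * bcoeff m (Suc n) - 10 * acoeff m (Suc n) = r2"
    unfolding a b by (simp_all add: field_simps) (simp_all add: det_def algebra_simps)
  then show "(8 * real (Suc n) + 6) * acoeff m (Suc n) - 13 * bcoeff m (Suc n) = 8 * real n * acoeff m n"
    and "(8 * real (Suc n) + 9) * bcoeff m (Suc n) - 10 * acoeff m (Suc n)
      = 8 * real n * bcoeff m n - 10 * acoeff m n + (if n = 0 then 10 * m else 0)"
    by (simp_all only: p_def q_def r1_def r2_def)
qed

lemma coeffs_step:
  assumes "n \<ge> 1"
  defines "d \<equiv> 64 * real n ^ 2 + 248 * real n + 108"
  shows "d * acoeff m (Suc n) = (64 * real n ^ 2 + 136 * real n - 130) * acoeff m n + 104 * real n * bcoeff m n"
    and "d * bcoeff m (Suc n) = - 140 * acoeff m n + (64 * real n ^ 2 + 112 * real n) * bcoeff m n"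
proof -
  let ?a = "acoeff m (Suc n)" and ?b = "bcoeff m (Suc n)" and ?k = "real (Suc n)"
  have "d * ?a = (8 * ?k + 9) * ((8 * ?k + 6) * ?a - 13 * ?b) + 13 * ((8 * ?k + 9) * ?b - 10 * ?a)"
    by (simp add: d_def algebra_simps power2_eq_square)
  then show "d * ?a = (64 * real n ^ 2 + 136 * real n - 130) * acoeff m n + 104 * real n * bcoeff m n"
    unfolding coeffs_linear_system using assms by (simp add: algebra_simps power2_eq_square)
  have "d * ?b = 10 * ((8 * ?k + 6) * ?a - 13 * ?b) + (8 * ?k + 6) * ((8 * ?k + 9) * ?b - 10 * ?a)"
    by (simp add: d_def algebra_simps power2_eq_square)
  then show "d * ?b = - 140 * acoeff m n + (64 * real n ^ 2 + 112 * real n) * bcoeff m n"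
    unfolding coeffs_linear_system using assms by (simp add: algebra_simps power2_eq_square)
qed

lemma coeffs_weighted_contraction:
  assumes "n \<ge> 32"
  shows "(2 * real n + 2) * (\<bar>acoeff m (Suc n)\<bar> + 3 * \<bar>bcoeff m (Suc n)\<bar>)
    \<le> (2 * real n - 1) * (\<bar>acoeff m n\<bar> + 3 * \<bar>bcoeff m n\<bar>)"
proof -
  define x where "x = real n"
  define d p q where "d = 64 * x ^ 2 + 248 * x + 108" and "p = 64 * x ^ 2 + 136 * x - 130"
    and "q = 64 * x ^ 2 + 112 * x"
  have x: "32 \<le> x"
    using assms by (simp add: x_def)
  have d: "0 < d" and p: "0 \<le> p" and q: "0 \<le> q"
    unfolding d_def p_def q_def using x zero_le_power2[of x] by (linarith+)
  have step: "d * acoeff m (Suc n) = p * acoeff m n + 104 * x * bcoeff m n"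
    "d * bcoeff m (Suc n) = - 140 * acoeff m n + q * bcoeff m n"
    using coeffs_step[of n m] assms by (simp_all add: x_def d_def p_def q_def)
  have "d * \<bar>acoeff m (Suc n)\<bar> \<le> p * \<bar>acoeff m n\<bar> + 104 * x * \<bar>bcoeff m n\<bar>"
    using abs_triangle_ineq[of "p * acoeff m n" "104 * x * bcoeff m n"] step(1) d p x
    by (simp add: abs_mult)
  moreover have "d * \<bar>bcoeff m (Suc n)\<bar> \<le> 140 * \<bar>acoeff m n\<bar> + q * \<bar>bcoeff m n\<bar>"
    using abs_triangle_ineq[of "- 140 * acoeff m n" "q * bcoeff m n"] step(2) d q
    by (simp add: abs_mult)
  ultimately have "d * (\<bar>acoeff m (Suc n)\<bar> + 3 * \<bar>bcoeff m (Suc n)\<bar>)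
      \<le> (p + 420) * \<bar>acoeff m n\<bar> + (104 * x + 3 * q) * \<bar>bcoeff m n\<bar>"
    by (simp add: algebra_simps)
  then have "(2 * x + 2) * (d * (\<bar>acoeff m (Suc n)\<bar> + 3 * \<bar>bcoeff m (Suc n)\<bar>))
      \<le> (2 * x + 2) * ((p + 420) * \<bar>acoeff m n\<bar> + (104 * x + 3 * q) * \<bar>bcoeff m n\<bar>)"
    using x by (intro mult_left_mono) auto
  also have "\<dots> = (2 * x + 2) * (p + 420) * \<bar>acoeff m n\<bar> + (2 * x + 2) * (104 * x + 3 * q) * \<bar>bcoeff m n\<bar>"
    by (simp add: algebra_simps)
  also have "\<dots> \<le> (2 * x - 1) * d * \<bar>acoeff m n\<bar> + 3 * (2 * x - 1) * d * \<bar>bcoeff m n\<bar>"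
  proof (intro add_mono mult_right_mono)
    have "(2 * x - 1) * d - (2 * x + 2) * (p + 420) = x * (32 * x - 884) - 688"
      by (simp add: d_def p_def algebra_simps power2_eq_square)
    moreover have "32 * 140 \<le> x * (32 * x - 884)"
      using x by (intro mult_mono) auto
    ultimately show "(2 * x + 2) * (p + 420) \<le> (2 * x - 1) * d"
      by linarith
    have "3 * (2 * x - 1) * d - (2 * x + 2) * (104 * x + 3 * q) = x * (32 * x - 976) - 324"
      by (simp add: d_def q_def algebra_simps power2_eq_square)
    moreover have "32 * 48 \<le> x * (32 * x - 976)"
      using x by (intro mult_mono) auto
    ultimately show "(2 * x + 2) * (104 * x + 3 * q) \<le> 3 * (2 * x - 1) * d"
      by linarith
  qed simp_all
  finally have "d * ((2 * x + 2) * (\<bar>acoeff m (Suc n)\<bar> + 3 * \<bar>bcoeff m (Suc n)\<bar>))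
      \<le> d * ((2 * x - 1) * (\<bar>acoeff m n\<bar> + 3 * \<bar>bcoeff m n\<bar>))"
    by (simp add: algebra_simps)
  then show ?thesis
    using d by (simp add: x_def)
qed

lemma summable_abs_coeffs:
  "summable (\<lambda>n. \<bar>acoeff m n\<bar>)" "summable (\<lambda>n. \<bar>bcoeff m n\<bar>)"
proof -
  have weighted: "summable (\<lambda>n. \<bar>acoeff m n\<bar> + 3 * \<bar>bcoeff m n\<bar>)"
    by (rule summable_by_Raabe_three_halves[OF _ coeffs_weighted_contraction]) auto
  show "summable (\<lambda>n. \<bar>acoeff m n\<bar>)" "summable (\<lambda>n. \<bar>bcoeff m n\<bar>)"
    by (rule summable_comparison_test[OF _ weighted]; simp)+
qed

section \<open>The profile equations for formal power series\<close>

lemma fps_X_times_deriv_nth: "fps_nth (fps_X * fps_deriv f) n = of_nat n * fps_nth f n"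
  by (cases n) simp_all

lemma fps_X_one_minus_X_deriv_nth:
  fixes f :: "'a :: comm_ring_1 fps"
  shows "fps_nth (fps_const c * fps_X * (1 - fps_X) * fps_deriv f) 0 = 0"
    and "fps_nth (fps_const c * fps_X * (1 - fps_X) * fps_deriv f) (Suc n)
      = c * (of_nat (Suc n) * fps_nth f (Suc n) - of_nat n * fps_nth f n)"
proof -
  have "fps_const c * fps_X * (1 - fps_X) * fps_deriv f
      = fps_const c * (fps_X * fps_deriv f) - fps_const c * (fps_X * (fps_X * fps_deriv f))"
    by (simp add: algebra_simps)
  then show "fps_nth (fps_const c * fps_X * (1 - fps_X) * fps_deriv f) 0 = 0"
    and "fps_nth (fps_const c * fps_X * (1 - fps_X) * fps_deriv f) (Suc n)
      = c * (of_nat (Suc n) * fps_nth f (Suc n) - of_nat n * fps_nth f n)"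
    by (auto simp: fps_X_times_deriv_nth algebra_simps)
qed

lemma fps_one_minus_X_mult_nth:
  fixes f :: "'a :: comm_ring_1 fps"
  shows "fps_nth (fps_const c * (1 - fps_X) * f) 0 = c * fps_nth f 0"
    and "fps_nth (fps_const c * (1 - fps_X) * f) (Suc n) = c * (fps_nth f (Suc n) - fps_nth f n)"
proof -
  have "fps_const c * (1 - fps_X) * f = fps_const c * f - fps_const c * (fps_X * f)"
    by (simp add: algebra_simps)
  then show "fps_nth (fps_const c * (1 - fps_X) * f) 0 = c * fps_nth f 0"
    and "fps_nth (fps_const c * (1 - fps_X) * f) (Suc n) = c * (fps_nth f (Suc n) - fps_nth f n)"
    by (simp_all add: algebra_simps)
qed

definition afps :: "real \<Rightarrow> real fps" where "afps m = Abs_fps (acoeff m)"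
definition bfps :: "real \<Rightarrow> real fps" where "bfps m = Abs_fps (bcoeff m)"

lemma afps_ode: "8 * fps_X * (1 - fps_X) * fps_deriv (afps m) + 6 * afps m - 13 * bfps m = 0"
proof (rule fps_ext)
  fix n
  show "fps_nth (8 * fps_X * (1 - fps_X) * fps_deriv (afps m) + 6 * afps m - 13 * bfps m) n = fps_nth 0 n"
  proof (cases n)
    case (Suc k)
    then show ?thesis
      using coeffs_linear_system(1)[of k m] unfolding numeral_fps_const
      by (simp add: fps_X_one_minus_X_deriv_nth afps_def bfps_def) (simp add: algebra_simps)
  qed (simp add: numeral_fps_const fps_X_one_minus_X_deriv_nth afps_def bfps_def)
qed

lemma bfps_ode:
  "8 * fps_X * (1 - fps_X) * fps_deriv (bfps m) + 9 * bfps m - 10 * (1 - fps_X) * afps m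
     - fps_const (10 * m) * fps_X = 0"
proof (rule fps_ext)
  fix n
  show "fps_nth (8 * fps_X * (1 - fps_X) * fps_deriv (bfps m) + 9 * bfps m - 10 * (1 - fps_X) * afps m
     - fps_const (10 * m) * fps_X) n = fps_nth 0 n"
  proof (cases n)
    case (Suc k)
    then show ?thesis
      using coeffs_linear_system(2)[of k m] unfolding numeral_fps_const
      by (simp add: fps_X_one_minus_X_deriv_nth fps_one_minus_X_mult_nth afps_def bfps_def)
        (simp add: algebra_simps split: if_splits)
  qed (simp add: numeral_fps_const fps_X_one_minus_X_deriv_nth fps_one_minus_X_mult_nth afps_def bfps_def)
qed

lemma fps_conv_radius_ge_1:
  fixes f :: "real fps"
  assumes "summable (\<lambda>n. \<bar>fps_nth f n\<bar>)"
  shows "1 \<le> fps_conv_radius f"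
  using conv_radius_geI[of "fps_nth f" 1] summable_rabs_cancel[OF assms]
  by (simp add: fps_conv_radius_def one_ereal_def)

lemma fps_conv_radius_gt_ops:
  fixes f g :: "'a :: {banach, real_normed_div_algebra} fps"
  assumes "r < fps_conv_radius f" "r < fps_conv_radius g"
  shows "r < fps_conv_radius (f + g)" "r < fps_conv_radius (f - g)" "r < fps_conv_radius (f * g)"
  using assms fps_conv_radius_add[of f g] fps_conv_radius_diff[of f g] fps_conv_radius_mult[of f g]
  by (auto simp: min_def split: if_splits)

lemma afps_bfps_conv_radius: "1 \<le> fps_conv_radius (afps m)" "1 \<le> fps_conv_radius (bfps m)"
  using summable_abs_coeffs[of m] by (simp_all add: fps_conv_radius_ge_1 afps_def bfps_def)

lemma eval_fps_odes:
  assumes "\<bar>x\<bar> < 1"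
  shows "8 * x * (1 - x) * eval_fps (fps_deriv (afps m)) x + 6 * eval_fps (afps m) x
      - 13 * eval_fps (bfps m) x = 0"
    and "8 * x * (1 - x) * eval_fps (fps_deriv (bfps m)) x + 9 * eval_fps (bfps m) x
      - 10 * (1 - x) * eval_fps (afps m) x - 10 * m * x = 0"
proof -
  have "ereal (norm x) < 1"
    using assms by (simp add: one_ereal_def)
  then have radius: "norm x < fps_conv_radius (afps m)" "norm x < fps_conv_radius (bfps m)"
    using afps_bfps_conv_radius[of m] by (blast intro: less_le_trans)+
  then have "norm x < fps_conv_radius (fps_deriv (afps m))" "norm x < fps_conv_radius (fps_deriv (bfps m))"
    using fps_conv_radius_deriv[of "afps m"] fps_conv_radius_deriv[of "bfps m"]
    by (blast intro: less_le_trans)+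
  note radius = radius this
  show "8 * x * (1 - x) * eval_fps (fps_deriv (afps m)) x + 6 * eval_fps (afps m) x
      - 13 * eval_fps (bfps m) x = 0"
    using arg_cong[OF afps_ode[of m], of "\<lambda>f. eval_fps f x"] radius
    by (simp add: eval_fps_add eval_fps_diff eval_fps_mult fps_conv_radius_gt_ops)
  show "8 * x * (1 - x) * eval_fps (fps_deriv (bfps m)) x + 9 * eval_fps (bfps m) x
      - 10 * (1 - x) * eval_fps (afps m) x - 10 * m * x = 0"
    using arg_cong[OF bfps_ode[of m], of "\<lambda>f. eval_fps f x"] radius
    by (simp add: eval_fps_add eval_fps_diff eval_fps_mult fps_conv_radius_gt_ops
        mult.assoc)
qed

section \<open>The angular profiles\<close>

lemma abs_eval_fps_le:
  fixes f :: "real fps"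
  assumes summable: "summable (\<lambda>n. \<bar>fps_nth f n\<bar>)" and "fps_nth f 0 = 0" and "\<bar>x\<bar> \<le> 1"
  shows "\<bar>eval_fps f x\<bar> \<le> (\<Sum>n. \<bar>fps_nth f n\<bar>) * \<bar>x\<bar>"
proof -
  have term_le: "\<bar>fps_nth f n * x ^ n\<bar> \<le> \<bar>fps_nth f n\<bar> * \<bar>x\<bar>" for n
  proof (cases n)
    case (Suc k)
    have "\<bar>x\<bar> ^ n \<le> \<bar>x\<bar>"
      unfolding Suc using assms(3) by (simp add: mult_left_le power_le_one)
    then show ?thesis
      by (simp add: abs_mult power_abs mult_left_mono)
  qed (use assms(2) in simp)
  have summable_bound: "summable (\<lambda>n. \<bar>fps_nth f n\<bar> * \<bar>x\<bar>)"
    using summable by (rule summable_mult2)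
  have summable_terms: "summable (\<lambda>n. \<bar>fps_nth f n * x ^ n\<bar>)"
    by (rule summable_comparison_test'[OF summable_bound]) (use term_le in simp)
  have "\<bar>eval_fps f x\<bar> \<le> (\<Sum>n. \<bar>fps_nth f n * x ^ n\<bar>)"
    unfolding eval_fps_def by (rule summable_rabs[OF summable_terms])
  also have "\<dots> \<le> (\<Sum>n. \<bar>fps_nth f n\<bar> * \<bar>x\<bar>)"
    by (rule suminf_le[OF term_le summable_terms summable_bound])
  also have "\<dots> = (\<Sum>n. \<bar>fps_nth f n\<bar>) * \<bar>x\<bar>"
    by (rule suminf_mult2[OF summable, symmetric])
  finally show ?thesis .
qed

(* For \<gamma> = tan \<theta> this is sin\<^sup>2 \<theta>. *)
definition sin_sq_of_tan :: "real \<Rightarrow> real" where "sin_sq_of_tan \<gamma> = \<gamma>\<^sup>2 / (1 + \<gamma>\<^sup>2)"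

lemma one_plus_square_pos: "0 < 1 + (\<gamma>::real)\<^sup>2"
  by (simp add: add_pos_nonneg)

lemma sin_sq_of_tan_bounds: "0 \<le> sin_sq_of_tan \<gamma>" "sin_sq_of_tan \<gamma> < 1"
  using one_plus_square_pos[of \<gamma>] by (simp_all add: sin_sq_of_tan_def)

lemma one_minus_sin_sq_of_tan: "1 - sin_sq_of_tan \<gamma> = 1 / (1 + \<gamma>\<^sup>2)"
  using one_plus_square_pos[of \<gamma>] by (simp add: sin_sq_of_tan_def field_simps)

lemma sin_sq_of_tan_has_derivative:
  "(sin_sq_of_tan has_real_derivative 2 * \<gamma> / (1 + \<gamma>\<^sup>2)\<^sup>2) (at \<gamma>)"
  unfolding sin_sq_of_tan_def[abs_def] using one_plus_square_pos[of \<gamma>]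
  by (auto intro!: derivative_eq_intros simp: field_simps power2_eq_square)

lemma eval_fps_sin_sq_of_tan_has_derivative:
  fixes f :: "real fps"
  assumes "1 \<le> fps_conv_radius f"
  shows "((\<lambda>\<gamma>. eval_fps f (sin_sq_of_tan \<gamma>)) has_real_derivative
      eval_fps (fps_deriv f) (sin_sq_of_tan \<gamma>) * (2 * \<gamma> / (1 + \<gamma>\<^sup>2)\<^sup>2)) (at \<gamma>)"
proof -
  have "ereal (norm (sin_sq_of_tan \<gamma>)) < 1"
    using sin_sq_of_tan_bounds[of \<gamma>] by (simp add: one_ereal_def)
  then have "norm (sin_sq_of_tan \<gamma>) < fps_conv_radius f"
    using assms by (rule less_le_trans)
  from has_field_derivative_eval_fps[OF this] sin_sq_of_tan_has_derivative
  show ?thesis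
    by (rule DERIV_chain2)
qed

definition Gamma1 :: "real \<Rightarrow> real \<Rightarrow> real" where "Gamma1 m \<gamma> = eval_fps (afps m) (sin_sq_of_tan \<gamma>)"
definition Gamma2 :: "real \<Rightarrow> real \<Rightarrow> real" where "Gamma2 m \<gamma> = eval_fps (bfps m) (sin_sq_of_tan \<gamma>)"

lemma Gamma_has_derivative:
  "(Gamma1 m has_real_derivative
     eval_fps (fps_deriv (afps m)) (sin_sq_of_tan \<gamma>) * (2 * \<gamma> / (1 + \<gamma>\<^sup>2)\<^sup>2)) (at \<gamma>)"
  "(Gamma2 m has_real_derivative
     eval_fps (fps_deriv (bfps m)) (sin_sq_of_tan \<gamma>) * (2 * \<gamma> / (1 + \<gamma>\<^sup>2)\<^sup>2)) (at \<gamma>)"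
  unfolding Gamma1_def[abs_def] Gamma2_def[abs_def]
  by (intro eval_fps_sin_sq_of_tan_has_derivative afps_bfps_conv_radius)+

lemma Gamma_has_deriv:
  "(Gamma1 m has_real_derivative deriv (Gamma1 m) \<gamma>) (at \<gamma>)"
  "(Gamma2 m has_real_derivative deriv (Gamma2 m) \<gamma>) (at \<gamma>)"
  using Gamma_has_derivative[of m \<gamma>] by (metis DERIV_imp_deriv)+

lemma Gamma_odes:
  "4 * \<gamma> * deriv (Gamma1 m) \<gamma> + 6 * Gamma1 m \<gamma> - 13 * Gamma2 m \<gamma> = 0"
  "4 * \<gamma> * deriv (Gamma2 m) \<gamma> + 9 * Gamma2 m \<gamma> - 10 / (1 + \<gamma>\<^sup>2) * (Gamma1 m \<gamma> + \<gamma>\<^sup>2 * m) = 0"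
proof -
  let ?x = "sin_sq_of_tan \<gamma>"
  have chain: "4 * \<gamma> * (D * (2 * \<gamma> / (1 + \<gamma>\<^sup>2)\<^sup>2)) = 8 * ?x * (1 - ?x) * D" for D
    using one_plus_square_pos[of \<gamma>] by (simp add: sin_sq_of_tan_def field_simps power2_eq_square)
  have source: "10 / (1 + \<gamma>\<^sup>2) * (G + \<gamma>\<^sup>2 * m) = 10 * (1 - ?x) * G + 10 * m * ?x" for G
    unfolding one_minus_sin_sq_of_tan unfolding sin_sq_of_tan_def by (simp add: add_divide_distrib algebra_simps)
  have "\<bar>?x\<bar> < 1"
    using sin_sq_of_tan_bounds[of \<gamma>] by simp
  note odes = eval_fps_odes[OF this, of m]
  show "4 * \<gamma> * deriv (Gamma1 m) \<gamma> + 6 * Gamma1 m \<gamma> - 13 * Gamma2 m \<gamma> = 0"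
    using odes(1) unfolding DERIV_imp_deriv[OF Gamma_has_derivative(1)] chain
    by (simp add: Gamma1_def Gamma2_def)
  show "4 * \<gamma> * deriv (Gamma2 m) \<gamma> + 9 * Gamma2 m \<gamma> - 10 / (1 + \<gamma>\<^sup>2) * (Gamma1 m \<gamma> + \<gamma>\<^sup>2 * m) = 0"
    using odes(2) unfolding DERIV_imp_deriv[OF Gamma_has_derivative(2)] chain source
    by (simp add: Gamma1_def Gamma2_def)
qed

lemma abs_Gamma_le:
  "\<bar>Gamma1 m \<gamma>\<bar> \<le> (\<Sum>n. \<bar>acoeff m n\<bar>) * sin_sq_of_tan \<gamma>"
  "\<bar>Gamma2 m \<gamma>\<bar> \<le> (\<Sum>n. \<bar>bcoeff m n\<bar>) * sin_sq_of_tan \<gamma>"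
  using abs_eval_fps_le[of "afps m" "sin_sq_of_tan \<gamma>"] abs_eval_fps_le[of "bfps m" "sin_sq_of_tan \<gamma>"]
    summable_abs_coeffs[of m] sin_sq_of_tan_bounds[of \<gamma>]
  by (simp_all add: Gamma1_def Gamma2_def afps_def bfps_def)

section \<open>The angular average\<close>

(* Adding the two equations gives \<gamma> S' - S = (5/2) (\<gamma>\<^sup>2 / (1 + \<gamma>\<^sup>2)) (m - G1) for S = G1 + G2. *)
lemma ode_system_antiderivative:
  fixes G1 G2 :: "real \<Rightarrow> real"
  assumes "0 < \<gamma>"
    and D1: "(G1 has_real_derivative D1) (at \<gamma>)" and D2: "(G2 has_real_derivative D2) (at \<gamma>)"
    and ode1: "4 * \<gamma> * D1 + 6 * G1 \<gamma> - 13 * G2 \<gamma> = 0"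
    and ode2: "4 * \<gamma> * D2 + 9 * G2 \<gamma> - 10 / (1 + \<gamma>\<^sup>2) * (G1 \<gamma> + \<gamma>\<^sup>2 * m) = 0"
  shows "((\<lambda>g. m * arctan g - 2 / 5 * ((G1 g + G2 g) / g)) has_real_derivative G1 \<gamma> / (1 + \<gamma>\<^sup>2)) (at \<gamma>)"
proof -
  define Q where "Q = (G1 \<gamma> + \<gamma>\<^sup>2 * m) / (1 + \<gamma>\<^sup>2)"
  have "4 * \<gamma> * D2 + 9 * G2 \<gamma> - 10 * Q = 0"
    using ode2 by (simp add: Q_def)
  with ode1 have sum_ode: "(D1 + D2) * \<gamma> - (G1 \<gamma> + G2 \<gamma>) = 5 / 2 * (Q - G1 \<gamma>)"
    by (auto simp: algebra_simps)
  have Q_minus_G1: "Q - G1 \<gamma> = \<gamma>\<^sup>2 * (m - G1 \<gamma>) / (1 + \<gamma>\<^sup>2)"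
    using one_plus_square_pos[of \<gamma>] by (simp add: Q_def field_simps)
  have "((\<lambda>g. (G1 g + G2 g) / g) has_real_derivative
      ((D1 + D2) * \<gamma> - (G1 \<gamma> + G2 \<gamma>)) / \<gamma>\<^sup>2) (at \<gamma>)"
    using DERIV_quotient[OF DERIV_add[OF D1 D2] DERIV_ident] \<open>0 < \<gamma>\<close>
    by (simp add: power2_eq_square)
  then have "((\<lambda>g. m * arctan g - 2 / 5 * ((G1 g + G2 g) / g)) has_real_derivative
      m * inverse (1 + \<gamma>\<^sup>2) - 2 / 5 * (5 / 2 * (\<gamma>\<^sup>2 * (m - G1 \<gamma>) / (1 + \<gamma>\<^sup>2)) / \<gamma>\<^sup>2)) (at \<gamma>)"
    unfolding sum_ode Q_minus_G1 by (intro DERIV_diff DERIV_cmult DERIV_arctan)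
  moreover have "1 + \<gamma>\<^sup>2 \<noteq> 0" "\<gamma>\<^sup>2 \<noteq> 0"
    using \<open>0 < \<gamma>\<close> one_plus_square_pos[of \<gamma>] by simp_all
  then have "m * inverse (1 + \<gamma>\<^sup>2) - 2 / 5 * (5 / 2 * (\<gamma>\<^sup>2 * (m - G1 \<gamma>) / (1 + \<gamma>\<^sup>2)) / \<gamma>\<^sup>2)
      = G1 \<gamma> / (1 + \<gamma>\<^sup>2)"
    by (simp add: divide_simps) (simp add: algebra_simps)
  ultimately show ?thesis
    by simp
qed

lemma div_ident_tendsto_0_if_O_sin_sq_of_tan:
  fixes S :: "real \<Rightarrow> real"
  assumes "\<And>\<gamma>. 0 < \<gamma> \<Longrightarrow> \<bar>S \<gamma>\<bar> \<le> C * sin_sq_of_tan \<gamma>"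
  shows "((\<lambda>\<gamma>. S \<gamma> / \<gamma>) \<longlongrightarrow> 0) (at_right 0)" "((\<lambda>\<gamma>. S \<gamma> / \<gamma>) \<longlongrightarrow> 0) at_top"
proof -
  have bound: "norm (S \<gamma> / \<gamma>) \<le> C * (\<gamma> / (1 + \<gamma>\<^sup>2))" if "0 < \<gamma>" for \<gamma>
  proof -
    have "norm (S \<gamma> / \<gamma>) \<le> C * sin_sq_of_tan \<gamma> / \<gamma>"
      using assms[OF that] that by (simp add: abs_div divide_right_mono)
    also have "\<dots> = C * (\<gamma> / (1 + \<gamma>\<^sup>2))"
      using that by (simp add: sin_sq_of_tan_def power2_eq_square)
    finally show ?thesis .
  qed
  show "((\<lambda>\<gamma>. S \<gamma> / \<gamma>) \<longlongrightarrow> 0) (at_right 0)"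
  proof (rule Lim_null_comparison)
    show "\<forall>\<^sub>F \<gamma> in at_right 0. norm (S \<gamma> / \<gamma>) \<le> C * (\<gamma> / (1 + \<gamma>\<^sup>2))"
      using bound by (simp add: eventually_at_right_less eventually_at_filter)
    show "((\<lambda>\<gamma>::real. C * (\<gamma> / (1 + \<gamma>\<^sup>2))) \<longlongrightarrow> 0) (at_right 0)"
      by real_asymp
  qed
  show "((\<lambda>\<gamma>. S \<gamma> / \<gamma>) \<longlongrightarrow> 0) at_top"
  proof (rule Lim_null_comparison)
    show "\<forall>\<^sub>F \<gamma> in at_top. norm (S \<gamma> / \<gamma>) \<le> C * (\<gamma> / (1 + \<gamma>\<^sup>2))"
      using eventually_gt_at_top[of 0] by eventually_elim (rule bound)
    show "((\<lambda>\<gamma>::real. C * (\<gamma> / (1 + \<gamma>\<^sup>2))) \<longlongrightarrow> 0) at_top"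
      by real_asymp
  qed
qed

lemma set_integrable_div_one_plus_square:
  fixes G :: "real \<Rightarrow> real"
  assumes "continuous_on UNIV G" and "\<And>\<gamma>. \<bar>G \<gamma>\<bar> \<le> C"
  shows "set_integrable lborel {0<..} (\<lambda>\<gamma>. G \<gamma> / (1 + \<gamma>\<^sup>2))"
proof (rule set_integrable_bound)
  have "C \<ge> 0"
    using assms(2)[of 0] by linarith
  show "set_integrable lborel {0<..} (\<lambda>\<gamma>::real. C * (1 / (1 + \<gamma>\<^sup>2)))"
    using integrable_I0i_1_div_plus_square
    by (intro set_integrable_mult_right) (simp add: interval_lebesgue_integrable_def zero_ereal_def)
  have "continuous_on {0<..} (\<lambda>\<gamma>. G \<gamma> / (1 + \<gamma>\<^sup>2))"
    using one_plus_square_pos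
    by (intro continuous_intros continuous_on_subset[OF assms(1)]) (auto simp: less_imp_neq[symmetric])
  from borel_measurable_continuous_on_indicator[OF _ this]
  show "set_borel_measurable lborel {0<..} (\<lambda>\<gamma>. G \<gamma> / (1 + \<gamma>\<^sup>2))"
    unfolding set_borel_measurable_def by simp
  show "AE \<gamma> in lborel. \<gamma> \<in> {0<..} \<longrightarrow> norm (G \<gamma> / (1 + \<gamma>\<^sup>2)) \<le> norm (C * (1 / (1 + \<gamma>\<^sup>2)))"
    using assms(2) \<open>C \<ge> 0\<close> one_plus_square_pos
    by (intro AE_I2) (simp add: abs_div divide_right_mono)
qed

lemma has_integral_atLeast_FTC:
  fixes f F :: "real \<Rightarrow> real"
  assumes F: "\<And>x. a < x \<Longrightarrow> (F has_real_derivative f x) (at x)"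
    and f: "\<And>x. a < x \<Longrightarrow> isCont f x"
    and integrable: "set_integrable lborel {a<..} f"
    and A: "(F \<longlongrightarrow> A) (at_right a)" and B: "(F \<longlongrightarrow> B) at_top"
  shows "(f has_integral (B - A)) {a..}"
proof -
  have "(LBINT x=ereal a..\<infinity>. f x) = B - A"
  proof (rule interval_integral_FTC_integrable)
    show "(F has_vector_derivative f x) (at x)" if "ereal a < ereal x" "ereal x < \<infinity>" for x
      using F[of x] that by (simp add: has_real_derivative_iff_has_vector_derivative)
    show "set_integrable lborel (einterval (ereal a) \<infinity>) f"
      using integrable by simp
    show "((F \<circ> real_of_ereal) \<longlongrightarrow> A) (at_right (ereal a))"
      using A by (simp add: ereal_tendsto_simps1)
    show "((F \<circ> real_of_ereal) \<longlongrightarrow> B) (at_left \<infinity>)"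
      using B by (simp add: ereal_tendsto_simps1)
  qed (use f in auto)
  then have "(f has_integral (B - A)) {a<..}"
    using set_borel_integral_eq_integral[OF integrable] interval_integral_to_infinity_eq[of lborel a f]
    by (simp add: has_integral_iff)
  moreover have "negligible {x \<in> {a<..} - {a..}. f x \<noteq> 0}"
    by (rule negligible_subset[OF negligible_empty]) auto
  moreover have "negligible {x \<in> {a..} - {a<..}. f x \<noteq> 0}"
    by (rule negligible_subset[OF negligible_sing[of a]]) auto
  ultimately show ?thesis
    using has_integral_spike_set_eq by blast
qed

lemma Gamma1_integral: "((\<lambda>\<gamma>. Gamma1 m \<gamma> / (1 + \<gamma>\<^sup>2)) has_integral (m * pi / 2)) {0..}"
proof -
  define F where "F \<gamma> = m * arctan \<gamma> - 2 / 5 * ((Gamma1 m \<gamma> + Gamma2 m \<gamma>) / \<gamma>)" for \<gamma>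
  define C where "C = (\<Sum>n. \<bar>acoeff m n\<bar>) + (\<Sum>n. \<bar>bcoeff m n\<bar>)"
  have "\<bar>Gamma1 m \<gamma> + Gamma2 m \<gamma>\<bar> \<le> C * sin_sq_of_tan \<gamma>" if "0 < \<gamma>" for \<gamma>
    using abs_Gamma_le[of m \<gamma>] unfolding C_def by (simp add: algebra_simps)
  note quotient_limits = div_ident_tendsto_0_if_O_sin_sq_of_tan[OF this]
  have "((\<lambda>\<gamma>. Gamma1 m \<gamma> / (1 + \<gamma>\<^sup>2)) has_integral
      ((m * (pi / 2) - 2 / 5 * 0) - (m * arctan 0 - 2 / 5 * 0))) {0..}"
  proof (rule has_integral_atLeast_FTC[where F = F])
    show "(F has_real_derivative Gamma1 m \<gamma> / (1 + \<gamma>\<^sup>2)) (at \<gamma>)" if "0 < \<gamma>" for \<gamma>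
      unfolding F_def[abs_def]
      by (rule ode_system_antiderivative[OF that Gamma_has_deriv Gamma_odes])
    show "isCont (\<lambda>\<gamma>. Gamma1 m \<gamma> / (1 + \<gamma>\<^sup>2)) \<gamma>" for \<gamma>
      using DERIV_isCont[OF Gamma_has_deriv(1)] one_plus_square_pos[of \<gamma>]
      by (intro continuous_intros) auto
    show "set_integrable lborel {0<..} (\<lambda>\<gamma>. Gamma1 m \<gamma> / (1 + \<gamma>\<^sup>2))"
    proof (rule set_integrable_div_one_plus_square)
      show "continuous_on UNIV (Gamma1 m)"
        using DERIV_isCont[OF Gamma_has_deriv(1)] by (simp add: continuous_on_eq_continuous_at)
      show "\<bar>Gamma1 m \<gamma>\<bar> \<le> (\<Sum>n. \<bar>acoeff m n\<bar>)" for \<gamma>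
        using abs_Gamma_le(1)[of m \<gamma>] mult_left_le[of "sin_sq_of_tan \<gamma>" "\<Sum>n. \<bar>acoeff m n\<bar>"]
          sin_sq_of_tan_bounds[of \<gamma>] suminf_nonneg[OF summable_abs_coeffs(1)[of m]]
        by simp
    qed
    have "((\<lambda>\<gamma>. m * arctan \<gamma>) \<longlongrightarrow> m * arctan 0) (at_right 0)"
      by (intro tendsto_intros)
    from tendsto_diff[OF this tendsto_mult_left[OF quotient_limits(1)]]
    show "(F \<longlongrightarrow> m * arctan 0 - 2 / 5 * 0) (at_right 0)"
      unfolding F_def[abs_def] .
    from tendsto_diff[OF tendsto_mult_left[OF tendsto_arctan_at_top] tendsto_mult_left[OF quotient_limits(2)]]
    show "(F \<longlongrightarrow> m * (pi / 2) - 2 / 5 * 0) at_top"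
      unfolding F_def[abs_def] .
  qed
  then show ?thesis
    by simp
qed

theorem lemma3p1:
  shows "\<exists>a b :: nat \<Rightarrow> real.
    summable (\<lambda>k. \<bar>a k\<bar>) \<and> summable (\<lambda>k. \<bar>b k\<bar>) \<and>
    (let G1 = (\<lambda>\<gamma>::real. \<Sum>k. a k * (\<gamma>\<^sup>2 / (1 + \<gamma>\<^sup>2)) ^ k);
         G2 = (\<lambda>\<gamma>::real. \<Sum>k. b k * (\<gamma>\<^sup>2 / (1 + \<gamma>\<^sup>2)) ^ k);
         M = 2 / pi * integral {0..} (\<lambda>\<gamma>. G1 \<gamma> / (1 + \<gamma>\<^sup>2))
     in (\<lambda>\<gamma>. G1 \<gamma> / (1 + \<gamma>\<^sup>2)) integrable_on {0..} \<and>
        (\<forall>\<gamma>\<ge>0. G1 differentiable (at \<gamma>) \<and> G2 differentiable (at \<gamma>) \<and>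
           4 * \<gamma> * deriv G1 \<gamma> + 6 * G1 \<gamma> - 13 * G2 \<gamma> = 0 \<and>
           4 * \<gamma> * deriv G2 \<gamma> + 9 * G2 \<gamma>
             - 10 / (1 + \<gamma>\<^sup>2) * (G1 \<gamma> + \<gamma>\<^sup>2 * M) = 0) \<and>
        M = - 351 / 19)"
proof -
  define m :: real where "m = - 351 / 19"
  have G1: "(\<lambda>\<gamma>::real. \<Sum>k. acoeff m k * (\<gamma>\<^sup>2 / (1 + \<gamma>\<^sup>2)) ^ k) = Gamma1 m"
    and G2: "(\<lambda>\<gamma>::real. \<Sum>k. bcoeff m k * (\<gamma>\<^sup>2 / (1 + \<gamma>\<^sup>2)) ^ k) = Gamma2 m"
    by (simp_all add: fun_eq_iff Gamma1_def Gamma2_def afps_def bfps_def eval_fps_def sin_sq_of_tan_def)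
  have M: "2 / pi * integral {0..} (\<lambda>\<gamma>. Gamma1 m \<gamma> / (1 + \<gamma>\<^sup>2)) = m"
    unfolding integral_unique[OF Gamma1_integral[of m]] by simp
  have differentiable: "Gamma1 m differentiable (at \<gamma>)" "Gamma2 m differentiable (at \<gamma>)" for \<gamma>
    using Gamma_has_deriv real_differentiable_def by blast+
  show ?thesis
  proof (intro exI conjI)
    show "summable (\<lambda>k. \<bar>acoeff m k\<bar>)" "summable (\<lambda>k. \<bar>bcoeff m k\<bar>)"
      by (rule summable_abs_coeffs)+
    show "let G1 = (\<lambda>\<gamma>::real. \<Sum>k. acoeff m k * (\<gamma>\<^sup>2 / (1 + \<gamma>\<^sup>2)) ^ k);
         G2 = (\<lambda>\<gamma>::real. \<Sum>k. bcoeff m k * (\<gamma>\<^sup>2 / (1 + \<gamma>\<^sup>2)) ^ k);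
         M = 2 / pi * integral {0..} (\<lambda>\<gamma>. G1 \<gamma> / (1 + \<gamma>\<^sup>2))
     in (\<lambda>\<gamma>. G1 \<gamma> / (1 + \<gamma>\<^sup>2)) integrable_on {0..} \<and>
        (\<forall>\<gamma>\<ge>0. G1 differentiable (at \<gamma>) \<and> G2 differentiable (at \<gamma>) \<and>
           4 * \<gamma> * deriv G1 \<gamma> + 6 * G1 \<gamma> - 13 * G2 \<gamma> = 0 \<and>
           4 * \<gamma> * deriv G2 \<gamma> + 9 * G2 \<gamma>
             - 10 / (1 + \<gamma>\<^sup>2) * (G1 \<gamma> + \<gamma>\<^sup>2 * M) = 0) \<and>
        M = - 351 / 19"
      unfolding Let_def G1 G2 M
      using has_integral_integrable[OF Gamma1_integral] Gamma_odes differentiable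
      by (simp add: m_def)
  qed
qed

end
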